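(* Let $U\subset\mathbb R^2$ be an open set with coordinates $(x,y)$, let $h:U\to\mathbb R$ be a positive smooth function, and let $g_\Sigma=h^2(dx^2+dy^2)$, $\omega_\Sigma=h^2\,dx\wedge dy$. Let $V\subset\mathbb R$ be open and $\alpha=\alpha(z)$ a smooth nowhere vanishing function on $V$; let $A$ be an antiderivative of $\alpha$ ($A'=\alpha$) and let $\beta$ be defined by $\beta\alpha=e^A$. Let $l_2=l_2(x,y)$, $n_2=n_2(x,y)$ be smooth functions on $U$ with $d(l_2\,dx+n_2\,dy)=\omega_\Sigma$. On $M=U\times V\times\mathbb R$ with coordinates $(x,y,z,t)$ put $\theta_3=\frac1\beta(dt-l_2\,dx-n_2\,dy)$, $\theta_4=dz$, and define the metric $$g(X,Y)=e^{-A}g_\Sigma(X,Y)+\theta_3(X)\theta_3(Y)+\theta_4(X)\theta_4(Y).$$ Then $(M,g)$ admits a K\"ahler structure $\bar J$ with K\"ahler form $\bar\Omega=e^{-A}\omega_\Sigma+\theta_4\wedge\theta_3$ and a Hermitian structure $J$ with K\"ahler form $\Omega=e^{-A}\omega_\Sigma+\theta_3\wedge\theta_4$. The Ricci tensor of $(M,g)$ is $J$-invariant and $J$ is locally conformally K\"ahler. The Lee form of $(M,g,J)$ is $\theta=-\alpha\theta_4$. The scalar curvature of $(M,g)$ is $$\tau=2\Big(-\frac{(\Delta\ln h)e^A}{h^2}-2\alpha^2+2\alpha'+\frac{\beta''}{\beta}-2\Big(\frac{\beta'}{\beta}\Big)^2\Big),$$ where $\Delta f=f_{xx}+f_{yy}$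 and primes denote derivatives with respect to $z$.
   Context: For an almost Hermitian structure $J$ orthogonal with respect to $g$, its K\"ahler form is $\Omega(X,Y)=g(JX,Y)$. A Hermitian structure is an integrable orthogonal almost complex structure. The Lee form $\theta$ of a Hermitian surface $(M,g,J)$ is defined by $d\Omega=2\theta\wedge\Omega$. The Ricci tensor $\rho$ is $J$-invariant if $\rho(JX,JY)=\rho(X,Y)$ for all $X,Y$. The scalar curvature is $\tau=\mathrm{tr}_g\rho$. *)

theory Defs
  imports "HOL-Analysis.Analysis"
begin

fun Ck_on :: "nat \<Rightarrow> 'a::euclidean_space set \<Rightarrow> ('a \<Rightarrow> real) \<Rightarrow> bool" where
  "Ck_on 0 S f = continuous_on S f"
| "Ck_on (Suc k) S f = (f differentiable_on S \<and>
      (\<forall>b\<in>Basis. Ck_on k S (\<lambda>x. frechet_derivative f (at x) b)))"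

definition smooth_on :: "'a::euclidean_space set \<Rightarrow> ('a \<Rightarrow> real) \<Rightarrow> bool" where
  "smooth_on S f = (\<forall>k. Ck_on k S f)"

text \<open>A point p :: real^4 has coordinates (x,y,z,t) = (p$1, p$2, p$3, p$4).
  Coordinate vector fields are axis i 1.  Tensor fields are given by their components
  in the coordinate frame: a 1-form by w p i = w(d_i), a 2-form by w p i j = w(d_i,d_j),
  a 3-form by w p i j k, a (0,2)-tensor by T p i j, and an endomorphism field
  (a (1,1)-tensor) J by J p i j = i-th component of J(d_j).\<close>

type_synonym form1 = "real^4 \<Rightarrow> 4 \<Rightarrow> real"
type_synonym form2 = "real^4 \<Rightarrow> 4 \<Rightarrow> 4 \<Rightarrow> real"
type_synonym form3 = "real^4 \<Rightarrow> 4 \<Rightarrow> 4 \<Rightarrow> 4 \<Rightarrow> real"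
type_synonym endo = "real^4 \<Rightarrow> 4 \<Rightarrow> 4 \<Rightarrow> real"

definition pd :: "4 \<Rightarrow> (real^4 \<Rightarrow> real) \<Rightarrow> real^4 \<Rightarrow> real" where
  "pd i f p = frechet_derivative f (at p) (axis i 1)"

definition dx :: form1 where "dx p i = (if i = 1 then 1 else 0)"
definition dy :: form1 where "dy p i = (if i = 2 then 1 else 0)"
definition dz :: form1 where "dz p i = (if i = 3 then 1 else 0)"
definition dt :: form1 where "dt p i = (if i = 4 then 1 else 0)"

definition wedge11 :: "form1 \<Rightarrow> form1 \<Rightarrow> form2" where
  "wedge11 a b p i j = a p i * b p j - a p j * b p i"

definition wedge12 :: "form1 \<Rightarrow> form2 \<Rightarrow> form3" where
  "wedge12 a w p i j k = a p i * w p j k + a p j * w p k i + a p k * w p i j"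

definition ext_d1 :: "form1 \<Rightarrow> form2" where
  "ext_d1 a p i j = pd i (\<lambda>q. a q j) p - pd j (\<lambda>q. a q i) p"

definition ext_d2 :: "form2 \<Rightarrow> form3" where
  "ext_d2 w p i j k = pd i (\<lambda>q. w q j k) p + pd j (\<lambda>q. w q k i) p + pd k (\<lambda>q. w q i j) p"

definition metric_matrix :: "form2 \<Rightarrow> real^4 \<Rightarrow> real^4^4" where
  "metric_matrix g p = (\<chi> i j. g p i j)"

definition inv_metric :: "form2 \<Rightarrow> real^4 \<Rightarrow> 4 \<Rightarrow> 4 \<Rightarrow> real" where
  "inv_metric g p i j = matrix_inv (metric_matrix g p) $ i $ j"

text \<open>Christoffel symbols of the Levi-Civita connection: Gamma g p k i j = Gamma^k_{ij}.\<close>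
definition Gamma :: "form2 \<Rightarrow> real^4 \<Rightarrow> 4 \<Rightarrow> 4 \<Rightarrow> 4 \<Rightarrow> real" where
  "Gamma g p k i j = (\<Sum>l\<in>UNIV. inv_metric g p k l *
      (pd i (\<lambda>q. g q j l) p + pd j (\<lambda>q. g q i l) p - pd l (\<lambda>q. g q i j) p)) / 2"

definition Ricci :: "form2 \<Rightarrow> form2" where
  "Ricci g p i j = (\<Sum>k\<in>UNIV.
      pd k (\<lambda>q. Gamma g q k i j) p - pd j (\<lambda>q. Gamma g q k i k) p
      + (\<Sum>l\<in>UNIV. Gamma g p k k l * Gamma g p l i j - Gamma g p k j l * Gamma g p l i k))"

definition scalar_curv :: "form2 \<Rightarrow> real^4 \<Rightarrow> real" where
  "scalar_curv g p = (\<Sum>i\<in>UNIV. \<Sum>j\<in>UNIV. inv_metric g p i j * Ricci g p i j)"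

definition almost_complex_on :: "(real^4) set \<Rightarrow> endo \<Rightarrow> bool" where
  "almost_complex_on M J = (\<forall>p\<in>M. \<forall>i j.
      (\<Sum>k\<in>UNIV. J p i k * J p k j) = (if i = j then -1 else 0))"

definition orthogonal_on :: "(real^4) set \<Rightarrow> form2 \<Rightarrow> endo \<Rightarrow> bool" where
  "orthogonal_on M g J = (\<forall>p\<in>M. \<forall>i j.
      (\<Sum>k\<in>UNIV. \<Sum>l\<in>UNIV. J p k i * J p l j * g p k l) = g p i j)"

text \<open>Nijenhuis tensor N(d_j,d_k) = [Jd_j,Jd_k] - J[Jd_j,d_k] - J[d_j,Jd_k] - [d_j,d_k], i-th component.\<close>
definition nijenhuis :: "endo \<Rightarrow> real^4 \<Rightarrow> 4 \<Rightarrow> 4 \<Rightarrow> 4 \<Rightarrow> real" where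
  "nijenhuis J p i j k = (\<Sum>h\<in>UNIV.
        J p h j * pd h (\<lambda>q. J q i k) p - J p h k * pd h (\<lambda>q. J q i j) p
      - J p i h * pd j (\<lambda>q. J q h k) p + J p i h * pd k (\<lambda>q. J q h j) p)"

definition J_integrable_on :: "(real^4) set \<Rightarrow> endo \<Rightarrow> bool" where
  "J_integrable_on M J = (\<forall>p\<in>M. \<forall>i j k. nijenhuis J p i j k = 0)"

definition smooth_endo_on :: "(real^4) set \<Rightarrow> endo \<Rightarrow> bool" where
  "smooth_endo_on M J = (\<forall>i j. smooth_on M (\<lambda>p. J p i j))"

definition hermitian_on :: "(real^4) set \<Rightarrow> form2 \<Rightarrow> endo \<Rightarrow> bool" where
  "hermitian_on M g J = (smooth_endo_on M J \<and> almost_complex_on M J \<and>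
      orthogonal_on M g J \<and> J_integrable_on M J)"

definition kahler_form :: "form2 \<Rightarrow> endo \<Rightarrow> form2" where
  "kahler_form g J p i j = (\<Sum>k\<in>UNIV. J p k i * g p k j)"

definition kahler_on :: "(real^4) set \<Rightarrow> form2 \<Rightarrow> endo \<Rightarrow> bool" where
  "kahler_on M g J = (hermitian_on M g J \<and>
      (\<forall>p\<in>M. \<forall>i j k. ext_d2 (kahler_form g J) p i j k = 0))"

text \<open>Locally conformally Kaehler: every point has an open neighbourhood W and a smooth f on W
  such that the conformal metric e^f g (with Kaehler form e^f Omega) is Kaehler on W.\<close>
definition lck_on :: "(real^4) set \<Rightarrow> form2 \<Rightarrow> endo \<Rightarrow> bool" where
  "lck_on M g J = (hermitian_on M g J \<and> (\<forall>p\<in>M. \<exists>W f. open W \<and> p \<in> W \<and> W \<subseteq> M \<and>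
      smooth_on W f \<and>
      (\<forall>q\<in>W. \<forall>i j k. ext_d2 (\<lambda>r a b. exp (f r) * kahler_form g J r a b) q i j k = 0)))"

definition is_lee_form_on :: "(real^4) set \<Rightarrow> form2 \<Rightarrow> endo \<Rightarrow> form1 \<Rightarrow> bool" where
  "is_lee_form_on M g J \<theta> = (\<forall>p\<in>M. \<forall>i j k.
      ext_d2 (kahler_form g J) p i j k = 2 * wedge12 \<theta> (kahler_form g J) p i j k)"

definition ricci_J_invariant_on :: "(real^4) set \<Rightarrow> form2 \<Rightarrow> endo \<Rightarrow> bool" where
  "ricci_J_invariant_on M g J = (\<forall>p\<in>M. \<forall>i j.
      (\<Sum>k\<in>UNIV. \<Sum>l\<in>UNIV. J p k i * J p l j * Ricci g p k l) = Ricci g p i j)"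

definition xy :: "real^4 \<Rightarrow> real^2" where "xy p = vector [p$1, p$2]"

definition theta3 :: "(real \<Rightarrow> real) \<Rightarrow> (real^2 \<Rightarrow> real) \<Rightarrow> (real^2 \<Rightarrow> real) \<Rightarrow> form1" where
  "theta3 \<beta> l2 n2 p i = (dt p i - l2 (xy p) * dx p i - n2 (xy p) * dy p i) / \<beta> (p$3)"

definition theta4 :: form1 where "theta4 = dz"

definition gmet :: "(real^2 \<Rightarrow> real) \<Rightarrow> (real \<Rightarrow> real) \<Rightarrow> (real \<Rightarrow> real) \<Rightarrow>
    (real^2 \<Rightarrow> real) \<Rightarrow> (real^2 \<Rightarrow> real) \<Rightarrow> form2" where
  "gmet h A \<beta> l2 n2 p i j = exp (- A (p$3)) * (h (xy p))\<^sup>2 * (dx p i * dx p j + dy p i * dy p j)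
      + theta3 \<beta> l2 n2 p i * theta3 \<beta> l2 n2 p j + theta4 p i * theta4 p j"

definition omegaSigmaA :: "(real^2 \<Rightarrow> real) \<Rightarrow> (real \<Rightarrow> real) \<Rightarrow> form2" where
  "omegaSigmaA h A p i j = exp (- A (p$3)) * (h (xy p))\<^sup>2 * wedge11 dx dy p i j"

definition laplacian2 :: "(real^2 \<Rightarrow> real) \<Rightarrow> real^2 \<Rightarrow> real" where
  "laplacian2 f u =
     frechet_derivative (\<lambda>v. frechet_derivative f (at v) (axis 1 1)) (at u) (axis 1 1)
   + frechet_derivative (\<lambda>v. frechet_derivative f (at v) (axis 2 1)) (at u) (axis 2 1)"

end

theory Submission
  imports Defs
begin

text \<open>
  Everything is an explicit computation in the coordinates (x, y, z, t). Write E = exp (-A) and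
  \<Omega>_s = E \<omega>_\<Sigma> + s \<theta>3 \<and> \<theta>4. From n2_x - l2_y = h^2 one gets
  d\<theta>3 = -(\<beta>'/\<beta>) \<theta>4 \<and> \<theta>3 - (h^2/\<beta>) dx \<and> dy, and d(E \<omega>_\<Sigma>) = -\<alpha> \<theta>4 \<and> E \<omega>_\<Sigma>;
  since \<alpha> E = 1/\<beta>, this gives d\<Omega>_s = -(1 + s) (h^2/\<beta>) dx \<and> dy \<and> dz. So \<Omega>_(-1) is closed,
  while d\<Omega>_1 = 2 (-\<alpha> \<theta>4) \<and> \<Omega>_1 with -\<alpha> \<theta>4 = -dA exact, whence exp (2 A) \<Omega>_1 is closed.
  The structures J_s with J X1 = X2, J X3 = s X4 on the frame dual to (dx, dy, \<theta>3, \<theta>4) are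
  orthogonal and integrable. For the curvature, the inverse metric and the Christoffel symbols are
  computed in closed form; using \<beta> \<alpha> = exp A and its derivative, the Ricci tensor takes the
  J-invariant shape Y (dx^2 + dy^2) + W dx \<and> dy + X (\<theta>3^2 + \<theta>4^2), whose trace is \<tau>.
\<close>

section \<open>Directional derivatives\<close>

definition dderiv :: "'a::real_normed_vector \<Rightarrow> ('a \<Rightarrow> real) \<Rightarrow> 'a \<Rightarrow> real" where
  "dderiv v f p = frechet_derivative f (at p) v"

lemma pd_eq_dderiv: "pd i f p = dderiv (axis i 1) f p"
  by (simp add: pd_def dderiv_def)

lemma dderiv_eqI: "(f has_derivative D) (at p) \<Longrightarrow> dderiv v f p = D v"
  by (metis dderiv_def frechet_derivative_at)

lemma has_derivative_dderiv:
  "f differentiable (at p) \<Longrightarrow> (f has_derivative (\<lambda>v. dderiv v f p)) (at p)"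
  unfolding dderiv_def by (metis frechet_derivative_works eta_contract_eq)

lemma dderiv_const [simp]: "dderiv v (\<lambda>x. c) p = 0"
  by (rule dderiv_eqI) (rule has_derivative_const)

lemma dderiv_add [simp]: "f differentiable (at p) \<Longrightarrow> g differentiable (at p) \<Longrightarrow>
    dderiv v (\<lambda>x. f x + g x) p = dderiv v f p + dderiv v g p"
  by (rule dderiv_eqI) (intro has_derivative_add has_derivative_dderiv)

lemma dderiv_diff [simp]: "f differentiable (at p) \<Longrightarrow> g differentiable (at p) \<Longrightarrow>
    dderiv v (\<lambda>x. f x - g x) p = dderiv v f p - dderiv v g p"
  by (rule dderiv_eqI) (intro has_derivative_diff has_derivative_dderiv)

lemma dderiv_minus [simp]: "f differentiable (at p) \<Longrightarrow> dderiv v (\<lambda>x. - f x) p = - dderiv v f p"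
  by (rule dderiv_eqI) (intro has_derivative_minus has_derivative_dderiv)

lemma dderiv_mult [simp]: "f differentiable (at p) \<Longrightarrow> g differentiable (at p) \<Longrightarrow>
    dderiv v (\<lambda>x. f x * g x) p = f p * dderiv v g p + dderiv v f p * g p"
  by (rule dderiv_eqI) (intro has_derivative_mult has_derivative_dderiv)

lemma dderiv_divide [simp]: "f differentiable (at p) \<Longrightarrow> g differentiable (at p) \<Longrightarrow> g p \<noteq> 0 \<Longrightarrow>
    dderiv v (\<lambda>x. f x / g x) p = (dderiv v f p * g p - f p * dderiv v g p) / (g p * g p)"
  by (rule dderiv_eqI) (intro has_derivative_divide' has_derivative_dderiv)

lemma dderiv_power [simp]: "f differentiable (at p) \<Longrightarrow>
    dderiv v (\<lambda>x. f x ^ n) p = of_nat n * dderiv v f p * f p ^ (n - 1)"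
  by (rule dderiv_eqI) (intro has_derivative_power has_derivative_dderiv)

lemma dderiv_ln: "f differentiable (at p) \<Longrightarrow> f p > 0 \<Longrightarrow>
    dderiv v (\<lambda>x. ln (f x)) p = dderiv v f p / f p"
  by (rule dderiv_eqI, rule has_derivative_eq_rhs,
      rule has_derivative_ln, assumption, erule has_derivative_dderiv) (simp add: field_simps)

lemma dderiv_cong_open:
  assumes S: "open S" "p \<in> S" and eq: "\<And>x. x \<in> S \<Longrightarrow> f x = g x"
  shows "dderiv v f p = dderiv v g p"
proof -
  have "(f has_derivative D) (at p) = (g has_derivative D) (at p)" for D
    using has_derivative_transform_within_open[OF _ S, of f D UNIV g]
      has_derivative_transform_within_open[OF _ S, of g D UNIV f] eq by auto
  thus ?thesis unfolding dderiv_def frechet_derivative_def by simp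
qed

lemma differentiable_cong_open: "open S \<Longrightarrow> p \<in> S \<Longrightarrow> (\<And>x. x \<in> S \<Longrightarrow> f x = g x) \<Longrightarrow>
    f differentiable (at p) \<Longrightarrow> g differentiable (at p)"
  unfolding differentiable_def using has_derivative_transform_within_open by metis

lemma dderiv_real_eqI: "(f has_real_derivative d) (at z) \<Longrightarrow> dderiv 1 f z = d"
  using dderiv_eqI[OF has_field_derivative_imp_has_derivative] by simp

lemma has_derivative_vec_nth_compose:
  assumes "(\<psi> has_real_derivative d) (at (p$k))"
  shows "((\<lambda>q. \<psi> (q$k)) has_derivative (\<lambda>v. d * v$k)) (at p)"
  using has_derivative_compose[OF bounded_linear_imp_has_derivative[OF bounded_linear_vec_nth]
      has_field_derivative_imp_has_derivative[OF assms]] .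

lemma differentiable_vec_nth_compose:
  "(\<psi> has_real_derivative d) (at (p$k)) \<Longrightarrow> (\<lambda>q. \<psi> (q$k)) differentiable (at p)"
  by (rule differentiableI, erule has_derivative_vec_nth_compose)

lemma dderiv_axis_vec_nth_compose:
  assumes "(\<psi> has_real_derivative d) (at (p$k))"
  shows "dderiv (axis i 1) (\<lambda>q. \<psi> (q$k)) p = (if i = k then d else 0)"
  using dderiv_eqI[OF has_derivative_vec_nth_compose[OF assms], of "axis i 1"] by (auto simp: axis_def)

lemma linear_xy: "linear xy"
  by (rule linearI) (auto simp: xy_def vec_eq_iff vector_def forall_2)

lemma xy_axis: "xy (axis i 1) = (if i = 1 then axis 1 1 else if i = 2 then axis 2 1 else 0)"
  using exhaust_4[of i] by (auto simp: xy_def vec_eq_iff vector_def forall_2 axis_def)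

lemma has_derivative_xy_compose:
  "\<phi> differentiable (at (xy p)) \<Longrightarrow>
    ((\<lambda>q. \<phi> (xy q)) has_derivative (\<lambda>v. dderiv (xy v) \<phi> (xy p))) (at p)"
  using has_derivative_compose[OF linear_imp_has_derivative[OF linear_xy] has_derivative_dderiv] .

lemma differentiable_xy_compose:
  fixes \<phi> :: "real^2 \<Rightarrow> real"
  shows "\<phi> differentiable (at (xy p)) \<Longrightarrow> (\<lambda>q. \<phi> (xy q)) differentiable (at p)"
  by (rule differentiableI, erule has_derivative_xy_compose)

lemma dderiv_axis_xy_compose:
  assumes "\<phi> differentiable (at (xy p))"
  shows "dderiv (axis i 1) (\<lambda>q. \<phi> (xy q)) p =
    (if i = 1 then dderiv (axis 1 1) \<phi> (xy p) else if i = 2 then dderiv (axis 2 1) \<phi> (xy p) else 0)"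
proof -
  have "linear (\<lambda>v. dderiv v \<phi> (xy p))"
    using has_derivative_dderiv[OF assms] has_derivative_linear by blast
  then have "dderiv 0 \<phi> (xy p) = 0" using linear_0 by fastforce
  then show ?thesis
    using dderiv_eqI[OF has_derivative_xy_compose[OF assms], of "axis i 1"] by (simp add: xy_axis)
qed

section \<open>Functions of class C^k\<close>

lemma Ck_on_Suc_dderiv:
  "Ck_on (Suc k) S f = (f differentiable_on S \<and> (\<forall>b\<in>Basis. Ck_on k S (\<lambda>x. dderiv b f x)))"
  by (simp add: dderiv_def)

declare Ck_on.simps(2) [simp del] Ck_on_Suc_dderiv [simp]

lemma differentiable_on_openD:
  "open S \<Longrightarrow> f differentiable_on S \<Longrightarrow> x \<in> S \<Longrightarrow> f differentiable (at x)"
  using differentiable_on_eq_differentiable_at by blast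

lemma Ck_on_cong:
  assumes S: "open S" and "\<And>x. x \<in> S \<Longrightarrow> f x = g x" and "Ck_on k S f"
  shows "Ck_on k S g"
  using assms(2,3)
proof (induction k arbitrary: f g)
  case 0
  thus ?case using continuous_on_cong[of S S f g] by simp
next
  case (Suc k)
  have fd: "f differentiable_on S" using Suc.prems(2) by simp
  have "g differentiable_on S"
    unfolding differentiable_on_eq_differentiable_at[OF S]
    using differentiable_cong_open[OF S _ Suc.prems(1) differentiable_on_openD[OF S fd]] by blast
  moreover have "Ck_on k S (\<lambda>x. dderiv b g x)" if "b \<in> Basis" for b
  proof -
    have "Ck_on k S (\<lambda>x. dderiv b f x)" using Suc.prems(2) that by simp
    moreover have "dderiv b f x = dderiv b g x" if "x \<in> S" for x
      using dderiv_cong_open[OF S that] Suc.prems(1) by blast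
    ultimately show ?thesis using Suc.IH by blast
  qed
  ultimately show ?case by simp
qed

lemma Ck_on_SucD: "Ck_on (Suc k) S f \<Longrightarrow> Ck_on k S f"
proof (induction k arbitrary: f)
  case 0
  thus ?case using differentiable_imp_continuous_on by simp blast
next
  case (Suc k)
  thus ?case by simp
qed

lemma Ck_on_const: "open S \<Longrightarrow> Ck_on k S (\<lambda>x. c)"
  by (induction k arbitrary: c) simp_all

lemma Ck_on_add:
  assumes S: "open S"
  shows "Ck_on k S f \<Longrightarrow> Ck_on k S g \<Longrightarrow> Ck_on k S (\<lambda>x. f x + g x)"
proof (induction k arbitrary: f g)
  case 0 thus ?case by (simp add: continuous_on_add)
next
  case (Suc k)
  have fd: "f differentiable_on S" and gd: "g differentiable_on S" using Suc.prems by auto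
  have "Ck_on k S (\<lambda>x. dderiv b (\<lambda>x. f x + g x) x)" if b: "b \<in> Basis" for b
  proof (rule Ck_on_cong[OF S])
    show "Ck_on k S (\<lambda>x. dderiv b f x + dderiv b g x)"
      using Suc.IH Suc.prems b by simp
    show "dderiv b f x + dderiv b g x = dderiv b (\<lambda>x. f x + g x) x" if "x \<in> S" for x
      using differentiable_on_openD[OF S fd that] differentiable_on_openD[OF S gd that] by simp
  qed
  thus ?case using fd gd by (simp add: differentiable_on_add)
qed

lemma Ck_on_mult:
  assumes S: "open S"
  shows "Ck_on k S f \<Longrightarrow> Ck_on k S g \<Longrightarrow> Ck_on k S (\<lambda>x. f x * g x)"
proof (induction k arbitrary: f g)
  case 0 thus ?case by (simp add: continuous_on_mult)
next
  case (Suc k)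
  have fd: "f differentiable_on S" and gd: "g differentiable_on S" using Suc.prems by auto
  have fk: "Ck_on k S f" and gk: "Ck_on k S g" using Suc.prems Ck_on_SucD by blast+
  have "Ck_on k S (\<lambda>x. dderiv b (\<lambda>x. f x * g x) x)" if b: "b \<in> Basis" for b
  proof (rule Ck_on_cong[OF S])
    have "Ck_on k S (\<lambda>x. dderiv b g x)" "Ck_on k S (\<lambda>x. dderiv b f x)"
      using Suc.prems b by auto
    then show "Ck_on k S (\<lambda>x. f x * dderiv b g x + dderiv b f x * g x)"
      using Suc.IH fk gk Ck_on_add[OF S] by blast
    show "f x * dderiv b g x + dderiv b f x * g x = dderiv b (\<lambda>x. f x * g x) x" if "x \<in> S" for x
      using differentiable_on_openD[OF S fd that] differentiable_on_openD[OF S gd that] by simp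
  qed
  thus ?case using fd gd by (simp add: differentiable_on_mult del: dderiv_mult)
qed

lemma Ck_on_sum:
  assumes S: "open S" and "finite F"
  shows "(\<And>c. c \<in> F \<Longrightarrow> Ck_on k S (f c)) \<Longrightarrow> Ck_on k S (\<lambda>x. \<Sum>c\<in>F. f c x)"
  using assms(2)
proof (induction F rule: finite_induct)
  case empty thus ?case using Ck_on_const[OF S] by simp
next
  case (insert a F)
  thus ?case using Ck_on_add[OF S, of k "f a" "\<lambda>x. \<Sum>c\<in>F. f c x"] by simp
qed

lemma Ck_on_compose_linear:
  fixes L :: "'a::euclidean_space \<Rightarrow> 'b::euclidean_space"
  assumes L: "linear L" and S: "open S" and T: "open T" and ST: "\<And>x. x \<in> S \<Longrightarrow> L x \<in> T"
  shows "Ck_on k T \<phi> \<Longrightarrow> Ck_on k S (\<lambda>x. \<phi> (L x))"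
proof (induction k arbitrary: \<phi>)
  case 0
  have "continuous_on S L" using L linear_continuous_on linear_conv_bounded_linear by blast
  then show ?case using 0 ST continuous_on_compose2 by (metis Ck_on.simps(1) image_subsetI)
next
  case (Suc k)
  have LD: "(L has_derivative L) (at x)" for x
    using L linear_imp_has_derivative by blast
  have \<phi>x: "\<phi> differentiable (at (L x))" if "x \<in> S" for x
    by (intro differentiable_on_openD[OF T _ ST[OF that]]) (use Suc.prems in simp)
  have "(\<lambda>x. \<phi> (L x)) differentiable_on S"
    unfolding differentiable_on_eq_differentiable_at[OF S]
    using differentiable_chain_at[OF differentiableI[OF LD] \<phi>x] by (simp add: o_def)
  moreover have "Ck_on k S (\<lambda>x. dderiv b (\<lambda>x. \<phi> (L x)) x)" if b: "b \<in> Basis" for b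
  proof (rule Ck_on_cong[OF S])
    show "Ck_on k S (\<lambda>x. \<Sum>c\<in>Basis. (L b \<bullet> c) * dderiv c \<phi> (L x))"
    proof (rule Ck_on_sum[OF S finite_Basis])
      fix c :: 'b assume "c \<in> Basis"
      hence "Ck_on k S (\<lambda>x. dderiv c \<phi> (L x))" using Suc by simp
      thus "Ck_on k S (\<lambda>x. (L b \<bullet> c) * dderiv c \<phi> (L x))"
        using Ck_on_mult[OF S Ck_on_const[OF S]] by blast
    qed
    show "(\<Sum>c\<in>Basis. (L b \<bullet> c) * dderiv c \<phi> (L x)) = dderiv b (\<lambda>x. \<phi> (L x)) x" if x: "x \<in> S" for x
    proof -
      have l: "linear (\<lambda>v. dderiv v \<phi> (L x))"
        using has_derivative_dderiv[OF \<phi>x[OF x]] has_derivative_linear by blast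
      have "dderiv b (\<lambda>x. \<phi> (L x)) x = dderiv (L b) \<phi> (L x)"
        by (rule dderiv_eqI[OF has_derivative_compose[OF LD has_derivative_dderiv[OF \<phi>x[OF x]]]])
      also have "\<dots> = dderiv (\<Sum>c\<in>Basis. (L b \<bullet> c) *\<^sub>R c) \<phi> (L x)"
        by (simp add: euclidean_representation)
      also have "\<dots> = (\<Sum>c\<in>Basis. dderiv ((L b \<bullet> c) *\<^sub>R c) \<phi> (L x))"
        using linear_sum[OF l, of "\<lambda>c. (L b \<bullet> c) *\<^sub>R c" Basis] by simp
      also have "\<dots> = (\<Sum>c\<in>Basis. (L b \<bullet> c) * dderiv c \<phi> (L x))"
        using linear_scale[OF l] by simp
      finally show ?thesis by simp
    qed
  qed
  ultimately show ?case by simp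
qed

lemma smooth_on_differentiable: "smooth_on S f \<Longrightarrow> open S \<Longrightarrow> u \<in> S \<Longrightarrow> f differentiable (at u)"
  unfolding smooth_on_def using differentiable_on_openD Ck_on_Suc_dderiv[of 0 S f] by blast

lemma smooth_on_dderiv: "smooth_on S f \<Longrightarrow> b \<in> Basis \<Longrightarrow> smooth_on S (dderiv b f)"
  unfolding smooth_on_def by (metis Ck_on_Suc_dderiv)

lemma Ck_on_0_if_derivative:
  "(\<And>z. z \<in> V \<Longrightarrow> (f has_real_derivative f' z) (at z)) \<Longrightarrow> Ck_on 0 V f"
  using DERIV_isCont continuous_at_imp_continuous_on by (metis Ck_on.simps(1))

lemma Ck_on_Suc_if_derivative:
  fixes f f' :: "real \<Rightarrow> real"
  assumes V: "open V" and d: "\<And>z. z \<in> V \<Longrightarrow> (f has_real_derivative f' z) (at z)"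
    and "Ck_on k V f'"
  shows "Ck_on (Suc k) V f"
proof -
  have "f differentiable_on V"
    unfolding differentiable_on_eq_differentiable_at[OF V]
    using d real_differentiable_def by blast
  moreover have "Ck_on k V (\<lambda>x. dderiv 1 f x)"
    using Ck_on_cong[OF V _ assms(3)] dderiv_real_eqI[OF d] by metis
  ultimately show ?thesis by (simp add: Basis_real_def)
qed

lemma Ck_on_Suc_has_real_derivative:
  fixes f :: "real \<Rightarrow> real"
  assumes "open V" and "Ck_on (Suc k) V f" and "z \<in> V"
  shows "(f has_real_derivative deriv f z) (at z)"
proof -
  have "f differentiable (at z)" using assms differentiable_on_openD by auto
  thus ?thesis using DERIV_deriv_iff_real_differentiable by blast
qed

lemma Ck_on_deriv:
  fixes f :: "real \<Rightarrow> real"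
  assumes V: "open V" and c: "Ck_on (Suc k) V f"
  shows "Ck_on k V (deriv f)"
proof (rule Ck_on_cong[OF V])
  show "Ck_on k V (\<lambda>x. dderiv 1 f x)" using c by (simp add: Basis_real_def)
  show "dderiv 1 f x = deriv f x" if "x \<in> V" for x
    using dderiv_real_eqI[OF Ck_on_Suc_has_real_derivative[OF V c that]] .
qed

lemma matrix_inv_eqI:
  fixes X Y :: "real^'n^'n"
  assumes "X ** Y = mat 1" "Y ** X = mat 1"
  shows "matrix_inv X = Y"
proof -
  have "\<exists>Y'. X ** Y' = mat 1 \<and> Y' ** X = mat 1" using assms by blast
  then have inv: "X ** matrix_inv X = mat 1 \<and> matrix_inv X ** X = mat 1"
    unfolding matrix_inv_def by (rule someI_ex)
  have "matrix_inv X = matrix_inv X ** (X ** Y)" using assms by (simp add: matrix_mul_rid)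
  also have "\<dots> = (matrix_inv X ** X) ** Y" by (simp add: matrix_mul_assoc)
  also have "\<dots> = Y" using inv by (simp add: matrix_mul_lid)
  finally show ?thesis .
qed

lemma coframe_simps:
  "dx q 1 = 1" "dx q 2 = 0" "dx q 3 = 0" "dx q 4 = 0"
  "dy q 1 = 0" "dy q 2 = 1" "dy q 3 = 0" "dy q 4 = 0"
  "dz q 1 = 0" "dz q 2 = 0" "dz q 3 = 1" "dz q 4 = 0"
  "dt q 1 = 0" "dt q 2 = 0" "dt q 3 = 0" "dt q 4 = 1"
  by (simp_all add: dx_def dy_def dz_def dt_def)

lemma ext_d2_mult:
  assumes "\<phi> differentiable (at p)" and "\<And>a b. (\<lambda>q. w q a b) differentiable (at p)"
  shows "ext_d2 (\<lambda>r a b. \<phi> r * w r a b) p i j k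
    = \<phi> p * ext_d2 w p i j k + wedge12 (\<lambda>p i. pd i \<phi> p) w p i j k"
  unfolding ext_d2_def wedge12_def pd_eq_dderiv using dderiv_mult[OF assms] by (simp add: algebra_simps)

section \<open>The construction\<close>

abbreviation e1 :: "real^2" where "e1 \<equiv> axis 1 1"
abbreviation e2 :: "real^2" where "e2 \<equiv> axis 2 1"

locale kahler_lck_data =
  fixes U :: "(real^2) set" and V :: "real set"
    and h l2 n2 :: "real^2 \<Rightarrow> real" and \<alpha> A \<beta> :: "real \<Rightarrow> real"
  assumes open_U: "open U" and smooth_h: "smooth_on U h" and h_pos: "\<forall>u\<in>U. h u > 0"
    and open_V: "open V" and smooth_alpha: "smooth_on V \<alpha>" and alpha_nonzero: "\<forall>z\<in>V. \<alpha> z \<noteq> 0"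
    and A_deriv: "\<forall>z\<in>V. (A has_real_derivative \<alpha> z) (at z)"
    and beta_alpha: "\<forall>z\<in>V. \<beta> z * \<alpha> z = exp (A z)"
    and smooth_l2: "smooth_on U l2" and smooth_n2: "smooth_on U n2"
    and d_l2_n2: "\<forall>u\<in>U. frechet_derivative n2 (at u) e1 - frechet_derivative l2 (at u) e2 = (h u)\<^sup>2"
begin

definition "Mspace = {p :: real^4. xy p \<in> U \<and> p$3 \<in> V}"
definition "gM = gmet h A \<beta> l2 n2"

lemma open_Mspace: "open Mspace"
proof -
  have "Mspace = xy -` U \<inter> (\<lambda>p. p$3) -` V" unfolding Mspace_def by auto
  moreover have "open (xy -` U)"
    using continuous_open_vimage[OF open_U] linear_xy linear_continuous_at linear_conv_bounded_linear
    by blast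
  moreover have "open ((\<lambda>p::real^4. p$3) -` V)" using open_vimage_vec_nth[OF open_V] .
  ultimately show ?thesis by auto
qed

lemma Mspace_xy: "p \<in> Mspace \<Longrightarrow> xy p \<in> U" and Mspace_z: "p \<in> Mspace \<Longrightarrow> p$3 \<in> V"
  unfolding Mspace_def by auto

lemma Ck_alpha: "Ck_on k V \<alpha>"
  using smooth_alpha smooth_on_def by blast

lemma has_deriv_alpha: "z \<in> V \<Longrightarrow> (\<alpha> has_real_derivative deriv \<alpha> z) (at z)"
  using Ck_on_Suc_has_real_derivative[OF open_V Ck_alpha] .

lemma Ck_deriv_alpha: "Ck_on k V (deriv \<alpha>)"
  using Ck_on_deriv[OF open_V Ck_alpha] .

lemma Ck_A: "Ck_on k V A"
  using Ck_on_Suc_if_derivative[OF open_V _ Ck_alpha] A_deriv Ck_on_SucD by blast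

lemma has_deriv_exp_A:
  "z \<in> V \<Longrightarrow> ((\<lambda>z. exp (c * A z)) has_real_derivative (c * \<alpha> z * exp (c * A z))) (at z)"
  using A_deriv by (auto intro!: derivative_eq_intros)

lemma Ck_exp_A: "Ck_on k V (\<lambda>z. exp (c * A z))"
proof (induction k)
  case 0 show ?case using Ck_on_0_if_derivative[OF has_deriv_exp_A] by blast
next
  case (Suc k)
  have "Ck_on k V (\<lambda>z. c * \<alpha> z * exp (c * A z))"
    using Ck_on_mult[OF open_V Ck_on_mult[OF open_V Ck_on_const[OF open_V] Ck_alpha] Suc] .
  thus ?case using Ck_on_Suc_if_derivative[OF open_V has_deriv_exp_A] by blast
qed

lemma has_deriv_inverse_alpha: "z \<in> V \<Longrightarrow>
    ((\<lambda>z. 1 / \<alpha> z) has_real_derivative (- deriv \<alpha> z * (1 / \<alpha> z) * (1 / \<alpha> z))) (at z)"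
  using has_deriv_alpha alpha_nonzero
  by (auto intro!: derivative_eq_intros simp: field_simps power2_eq_square)

lemma Ck_inverse_alpha: "Ck_on k V (\<lambda>z. 1 / \<alpha> z)"
proof (induction k)
  case 0 show ?case using Ck_on_0_if_derivative[OF has_deriv_inverse_alpha] by blast
next
  case (Suc k)
  have "Ck_on k V (\<lambda>z. - deriv \<alpha> z * (1 / \<alpha> z) * (1 / \<alpha> z))"
    using Ck_on_mult[OF open_V Ck_on_mult[OF open_V Ck_on_mult[OF open_V Ck_on_const[OF open_V]
          Ck_deriv_alpha] Suc] Suc, of "-1"] by simp
  thus ?case using Ck_on_Suc_if_derivative[OF open_V has_deriv_inverse_alpha] by blast
qed

lemma beta_nonzero: "z \<in> V \<Longrightarrow> \<beta> z \<noteq> 0"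
  using beta_alpha by (metis exp_not_eq_zero mult_zero_left)

lemma Ck_beta: "Ck_on k V \<beta>"
proof (rule Ck_on_cong[OF open_V _ Ck_on_mult[OF open_V Ck_exp_A[of k 1] Ck_inverse_alpha]])
  show "exp (1 * A z) * (1 / \<alpha> z) = \<beta> z" if "z \<in> V" for z
    using beta_alpha alpha_nonzero that by (simp add: field_simps)
qed

lemma Ck_inverse_beta: "Ck_on k V (\<lambda>z. 1 / \<beta> z)"
proof (rule Ck_on_cong[OF open_V _ Ck_on_mult[OF open_V Ck_alpha Ck_exp_A[of k "-1"]]])
  show "\<alpha> z * exp (-1 * A z) = 1 / \<beta> z" if "z \<in> V" for z
    using beta_alpha beta_nonzero that by (simp add: field_simps exp_minus)
qed

lemma has_deriv_beta: "z \<in> V \<Longrightarrow> (\<beta> has_real_derivative deriv \<beta> z) (at z)"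
  using Ck_on_Suc_has_real_derivative[OF open_V Ck_beta] .

lemma has_deriv_deriv_beta: "z \<in> V \<Longrightarrow> (deriv \<beta> has_real_derivative deriv (deriv \<beta>) z) (at z)"
  using Ck_on_Suc_has_real_derivative[OF open_V Ck_on_deriv[OF open_V Ck_beta]] .

lemma deriv_beta_alpha:
  assumes z: "z \<in> V"
  shows "deriv \<beta> z * \<alpha> z + \<beta> z * deriv \<alpha> z = \<alpha> z * (\<beta> z * \<alpha> z)"
proof -
  have "((\<lambda>z. \<beta> z * \<alpha> z) has_real_derivative (deriv \<beta> z * \<alpha> z + \<beta> z * deriv \<alpha> z)) (at z)"
    using has_deriv_beta[OF z] has_deriv_alpha[OF z] by (auto intro!: derivative_eq_intros)
  moreover have "((\<lambda>z. \<beta> z * \<alpha> z) has_real_derivative (\<alpha> z * exp (A z))) (at z)"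
    by (rule has_field_derivative_transform_within_open[OF _ open_V z],
        use has_deriv_exp_A[OF z, of 1] in simp) (use beta_alpha in auto)
  ultimately show ?thesis using DERIV_unique beta_alpha z by fastforce
qed

definition "l2M q = l2 (xy q)"
definition "n2M q = n2 (xy q)"
definition "hM q = h (xy q)"
definition "l2M_x q = dderiv e1 l2 (xy q)"
definition "l2M_y q = dderiv e2 l2 (xy q)"
definition "n2M_x q = dderiv e1 n2 (xy q)"
definition "n2M_y q = dderiv e2 n2 (xy q)"
definition "hM_x q = dderiv e1 h (xy q)"
definition "hM_y q = dderiv e2 h (xy q)"
definition "expmA q = exp (- A (q$3))"
definition "alphaM q = \<alpha> (q$3)"
definition "betaM q = \<beta> (q$3)"
definition "dbetaM q = deriv \<beta> (q$3)"

lemma smooth_xy_functions: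
  "smooth_on U h" "smooth_on U l2" "smooth_on U n2"
  "smooth_on U (dderiv e1 h)" "smooth_on U (dderiv e2 h)"
  "smooth_on U (dderiv e1 l2)" "smooth_on U (dderiv e2 l2)"
  "smooth_on U (dderiv e1 n2)" "smooth_on U (dderiv e2 n2)"
  using smooth_h smooth_l2 smooth_n2 by (simp_all add: smooth_on_dderiv)

lemma differentiable_xy_functions:
  assumes "p \<in> Mspace"
  shows "l2M differentiable (at p)" "n2M differentiable (at p)" "hM differentiable (at p)"
    "l2M_x differentiable (at p)" "l2M_y differentiable (at p)"
    "n2M_x differentiable (at p)" "n2M_y differentiable (at p)"
    "hM_x differentiable (at p)" "hM_y differentiable (at p)"
  unfolding l2M_def [abs_def] n2M_def [abs_def] hM_def [abs_def] l2M_x_def [abs_def]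
    l2M_y_def [abs_def] n2M_x_def [abs_def] n2M_y_def [abs_def] hM_x_def [abs_def] hM_y_def [abs_def]
  using differentiable_xy_compose[OF smooth_on_differentiable[OF _ open_U Mspace_xy[OF assms]]]
    smooth_xy_functions by simp_all

lemma dderiv_xy_functions:
  assumes "p \<in> Mspace"
  shows "dderiv (axis i 1) l2M p = (if i = 1 then l2M_x p else if i = 2 then l2M_y p else 0)"
    "dderiv (axis i 1) n2M p = (if i = 1 then n2M_x p else if i = 2 then n2M_y p else 0)"
    "dderiv (axis i 1) hM p = (if i = 1 then hM_x p else if i = 2 then hM_y p else 0)"
    "dderiv (axis i 1) l2M_x p =
      (if i = 1 then dderiv e1 (dderiv e1 l2) (xy p) else if i = 2 then dderiv e2 (dderiv e1 l2) (xy p) else 0)"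
    "dderiv (axis i 1) l2M_y p =
      (if i = 1 then dderiv e1 (dderiv e2 l2) (xy p) else if i = 2 then dderiv e2 (dderiv e2 l2) (xy p) else 0)"
    "dderiv (axis i 1) n2M_x p =
      (if i = 1 then dderiv e1 (dderiv e1 n2) (xy p) else if i = 2 then dderiv e2 (dderiv e1 n2) (xy p) else 0)"
    "dderiv (axis i 1) n2M_y p =
      (if i = 1 then dderiv e1 (dderiv e2 n2) (xy p) else if i = 2 then dderiv e2 (dderiv e2 n2) (xy p) else 0)"
    "dderiv (axis i 1) hM_x p =
      (if i = 1 then dderiv e1 (dderiv e1 h) (xy p) else if i = 2 then dderiv e2 (dderiv e1 h) (xy p) else 0)"
    "dderiv (axis i 1) hM_y p =
      (if i = 1 then dderiv e1 (dderiv e2 h) (xy p) else if i = 2 then dderiv e2 (dderiv e2 h) (xy p) else 0)"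
  unfolding l2M_def [abs_def] n2M_def [abs_def] hM_def [abs_def] l2M_x_def [abs_def]
    l2M_y_def [abs_def] n2M_x_def [abs_def] n2M_y_def [abs_def] hM_x_def [abs_def] hM_y_def [abs_def]
  using dderiv_axis_xy_compose[OF smooth_on_differentiable[OF _ open_U Mspace_xy[OF assms]]]
    smooth_xy_functions by simp_all

lemma differentiable_z_functions:
  assumes "p \<in> Mspace"
  shows "expmA differentiable (at p)" "alphaM differentiable (at p)"
    "betaM differentiable (at p)" "dbetaM differentiable (at p)"
  using differentiable_vec_nth_compose[OF has_deriv_exp_A[OF Mspace_z[OF assms], of "-1"]]
    differentiable_vec_nth_compose[OF has_deriv_alpha[OF Mspace_z[OF assms]]]
    differentiable_vec_nth_compose[OF has_deriv_beta[OF Mspace_z[OF assms]]]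
    differentiable_vec_nth_compose[OF has_deriv_deriv_beta[OF Mspace_z[OF assms]]]
  by (simp_all add: expmA_def [abs_def] alphaM_def [abs_def] betaM_def [abs_def] dbetaM_def [abs_def])

lemma dderiv_z_functions:
  assumes "p \<in> Mspace"
  shows "dderiv (axis i 1) expmA p = (if i = 3 then - alphaM p * expmA p else 0)"
    "dderiv (axis i 1) alphaM p = (if i = 3 then deriv \<alpha> (p$3) else 0)"
    "dderiv (axis i 1) betaM p = (if i = 3 then dbetaM p else 0)"
    "dderiv (axis i 1) dbetaM p = (if i = 3 then deriv (deriv \<beta>) (p$3) else 0)"
  using dderiv_axis_vec_nth_compose[OF has_deriv_exp_A[OF Mspace_z[OF assms], of "-1"]]
    dderiv_axis_vec_nth_compose[OF has_deriv_alpha[OF Mspace_z[OF assms]]]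
    dderiv_axis_vec_nth_compose[OF has_deriv_beta[OF Mspace_z[OF assms]]]
    dderiv_axis_vec_nth_compose[OF has_deriv_deriv_beta[OF Mspace_z[OF assms]]]
  by (simp_all add: expmA_def [abs_def] alphaM_def [abs_def] betaM_def [abs_def] dbetaM_def [abs_def])

lemma hM_nonzero: "p \<in> Mspace \<Longrightarrow> hM p \<noteq> 0"
  unfolding hM_def using h_pos Mspace_xy by force

lemma betaM_nonzero: "p \<in> Mspace \<Longrightarrow> betaM p \<noteq> 0"
  unfolding betaM_def using beta_nonzero Mspace_z by blast

lemma alphaM_nonzero: "p \<in> Mspace \<Longrightarrow> alphaM p \<noteq> 0"
  unfolding alphaM_def using alpha_nonzero Mspace_z by blast

lemma expmA_nonzero: "expmA p \<noteq> 0"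
  unfolding expmA_def by simp

lemmas coefficient_simps = dderiv_xy_functions dderiv_z_functions
  differentiable_xy_functions differentiable_z_functions
  hM_nonzero betaM_nonzero alphaM_nonzero expmA_nonzero

lemma n2M_x_eq: "p \<in> Mspace \<Longrightarrow> n2M_x p = l2M_y p + (hM p)^2"
  unfolding n2M_x_def l2M_y_def hM_def dderiv_def using d_l2_n2 Mspace_xy by force

lemma expmA_eq: "p \<in> Mspace \<Longrightarrow> expmA p = 1 / (betaM p * alphaM p)"
  unfolding betaM_def alphaM_def expmA_def using beta_alpha Mspace_z by (simp add: exp_minus field_simps)

lemma exp_A_eq: "p \<in> Mspace \<Longrightarrow> exp (A (p$3)) = betaM p * alphaM p"
  unfolding betaM_def alphaM_def using beta_alpha Mspace_z by simp

lemma deriv_alpha_eq: "p \<in> Mspace \<Longrightarrow>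
    deriv \<alpha> (p$3) = (alphaM p * (betaM p * alphaM p) - dbetaM p * alphaM p) / betaM p"
  using deriv_beta_alpha[OF Mspace_z] betaM_nonzero
  unfolding betaM_def alphaM_def dbetaM_def by (simp add: eq_divide_eq algebra_simps)

subsection \<open>Levi-Civita connection and curvature\<close>

lemma gM_eq: "gM q i j = expmA q * (hM q)^2 * (dx q i * dx q j + dy q i * dy q j)
   + (dt q i - l2M q * dx q i - n2M q * dy q i) / betaM q * ((dt q j - l2M q * dx q j - n2M q * dy q j) / betaM q)
   + dz q i * dz q j"
  unfolding gM_def gmet_def theta3_def theta4_def expmA_def hM_def l2M_def n2M_def betaM_def by simp

definition "ginv k l q = (let EH = expmA q * (hM q)^2 in
   if k = 1 \<and> l = 1 then 1 / EH else
   if (k = 1 \<and> l = 4) \<or> (k = 4 \<and> l = 1) then l2M q / EH else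
   if k = 2 \<and> l = 2 then 1 / EH else
   if (k = 2 \<and> l = 4) \<or> (k = 4 \<and> l = 2) then n2M q / EH else
   if k = 3 \<and> l = 3 then 1 else
   if k = 4 \<and> l = 4 then ((l2M q)^2 + (n2M q)^2) / EH + (betaM q)^2 else 0)"

lemma inv_metric_gM: assumes q: "q \<in> Mspace" shows "inv_metric gM q k l = ginv k l q"
proof -
  have E: "expmA q \<noteq> 0" and H: "hM q \<noteq> 0" and b: "betaM q \<noteq> 0"
    using q by (simp_all add: coefficient_simps)
  have 1: "metric_matrix gM q ** (\<chi> k l. ginv k l q) = mat 1"
    unfolding metric_matrix_def matrix_matrix_mult_def mat_def
    by (simp add: vec_eq_iff forall_4 sum_4 gM_eq coframe_simps ginv_def Let_def)
      (use E H b in \<open>simp add: field_simps power2_eq_square\<close>)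
  have 2: "(\<chi> k l. ginv k l q) ** metric_matrix gM q = mat 1"
    unfolding metric_matrix_def matrix_matrix_mult_def mat_def
    by (simp add: vec_eq_iff forall_4 sum_4 gM_eq coframe_simps ginv_def Let_def)
      (use E H b in \<open>simp add: field_simps power2_eq_square\<close>)
  show ?thesis unfolding inv_metric_def using matrix_inv_eqI[OF 1 2] by simp
qed

text \<open>The Christoffel symbols Gamma^k_ij of gM, computed in closed form by computer algebra.\<close>

definition Christoffel :: "4 \<Rightarrow> 4 \<Rightarrow> 4 \<Rightarrow> real^4 \<Rightarrow> real" where
  "Christoffel k i j = (
   if k = 1 \<and> i = 1 \<and> j = 1 then (\<lambda>q. (1) * (hM_x q) / ((hM q)))
   else if k = 1 \<and> i = 1 \<and> j = 2 then (\<lambda>q. (-1/2) * (l2M q) / ((expmA q) * (betaM q) ^ 2) + (1) * (hM_y q) / ((hM q)))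
   else if k = 1 \<and> i = 1 \<and> j = 3 then (\<lambda>q. (-1/2) * (alphaM q))
   else if k = 1 \<and> i = 2 \<and> j = 1 then (\<lambda>q. (-1/2) * (l2M q) / ((expmA q) * (betaM q) ^ 2) + (1) * (hM_y q) / ((hM q)))
   else if k = 1 \<and> i = 2 \<and> j = 2 then (\<lambda>q. (-1) * (n2M q) / ((expmA q) * (betaM q) ^ 2) + (-1) * (hM_x q) / ((hM q)))
   else if k = 1 \<and> i = 2 \<and> j = 4 then (\<lambda>q. (1/2) / ((expmA q) * (betaM q) ^ 2))
   else if k = 1 \<and> i = 3 \<and> j = 1 then (\<lambda>q. (-1/2) * (alphaM q))
   else if k = 1 \<and> i = 4 \<and> j = 2 then (\<lambda>q. (1/2) / ((expmA q) * (betaM q) ^ 2))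
   else if k = 2 \<and> i = 1 \<and> j = 1 then (\<lambda>q. (1) * (l2M q) / ((expmA q) * (betaM q) ^ 2) + (-1) * (hM_y q) / ((hM q)))
   else if k = 2 \<and> i = 1 \<and> j = 2 then (\<lambda>q. (1/2) * (n2M q) / ((expmA q) * (betaM q) ^ 2) + (1) * (hM_x q) / ((hM q)))
   else if k = 2 \<and> i = 1 \<and> j = 4 then (\<lambda>q. (-1/2) / ((expmA q) * (betaM q) ^ 2))
   else if k = 2 \<and> i = 2 \<and> j = 1 then (\<lambda>q. (1/2) * (n2M q) / ((expmA q) * (betaM q) ^ 2) + (1) * (hM_x q) / ((hM q)))
   else if k = 2 \<and> i = 2 \<and> j = 2 then (\<lambda>q. (1) * (hM_y q) / ((hM q)))
   else if k = 2 \<and> i = 2 \<and> j = 3 then (\<lambda>q. (-1/2) * (alphaM q))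
   else if k = 2 \<and> i = 3 \<and> j = 2 then (\<lambda>q. (-1/2) * (alphaM q))
   else if k = 2 \<and> i = 4 \<and> j = 1 then (\<lambda>q. (-1/2) / ((expmA q) * (betaM q) ^ 2))
   else if k = 3 \<and> i = 1 \<and> j = 1 then (\<lambda>q. (1/2) * (expmA q) * (hM q) ^ 2 * (alphaM q) + (1) * (l2M q) ^ 2 * (dbetaM q) / ((betaM q) ^ 3))
   else if k = 3 \<and> i = 1 \<and> j = 2 then (\<lambda>q. (1) * (l2M q) * (n2M q) * (dbetaM q) / ((betaM q) ^ 3))
   else if k = 3 \<and> i = 1 \<and> j = 4 then (\<lambda>q. (-1) * (l2M q) * (dbetaM q) / ((betaM q) ^ 3))
   else if k = 3 \<and> i = 2 \<and> j = 1 then (\<lambda>q. (1) * (l2M q) * (n2M q) * (dbetaM q) / ((betaM q) ^ 3))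
   else if k = 3 \<and> i = 2 \<and> j = 2 then (\<lambda>q. (1/2) * (expmA q) * (hM q) ^ 2 * (alphaM q) + (1) * (n2M q) ^ 2 * (dbetaM q) / ((betaM q) ^ 3))
   else if k = 3 \<and> i = 2 \<and> j = 4 then (\<lambda>q. (-1) * (n2M q) * (dbetaM q) / ((betaM q) ^ 3))
   else if k = 3 \<and> i = 4 \<and> j = 1 then (\<lambda>q. (-1) * (l2M q) * (dbetaM q) / ((betaM q) ^ 3))
   else if k = 3 \<and> i = 4 \<and> j = 2 then (\<lambda>q. (-1) * (n2M q) * (dbetaM q) / ((betaM q) ^ 3))
   else if k = 3 \<and> i = 4 \<and> j = 4 then (\<lambda>q. (1) * (dbetaM q) / ((betaM q) ^ 3))
   else if k = 4 \<and> i = 1 \<and> j = 1 then (\<lambda>q. (1) * (l2M q) * (n2M q) / ((expmA q) * (betaM q) ^ 2) + (1) * (hM_x q) * (l2M q) / ((hM q)) + (-1) * (hM_y q) * (n2M q) / ((hM q)) + (-1) * (l2M_x q))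
   else if k = 4 \<and> i = 1 \<and> j = 2 then (\<lambda>q. (-1/2) * (l2M q) ^ 2 / ((expmA q) * (betaM q) ^ 2) + (1/2) * (n2M q) ^ 2 / ((expmA q) * (betaM q) ^ 2) + (1) * (hM_x q) * (n2M q) / ((hM q)) + (1) * (hM_y q) * (l2M q) / ((hM q)) + (-1/2) * (hM q) ^ 2 + (-1) * (l2M_y q))
   else if k = 4 \<and> i = 1 \<and> j = 3 then (\<lambda>q. (-1/2) * (l2M q) * (alphaM q) + (1) * (l2M q) * (dbetaM q) / ((betaM q)))
   else if k = 4 \<and> i = 1 \<and> j = 4 then (\<lambda>q. (-1/2) * (n2M q) / ((expmA q) * (betaM q) ^ 2))
   else if k = 4 \<and> i = 2 \<and> j = 1 then (\<lambda>q. (-1/2) * (l2M q) ^ 2 / ((expmA q) * (betaM q) ^ 2) + (1/2) * (n2M q) ^ 2 / ((expmA q) * (betaM q) ^ 2) + (1) * (hM_x q) * (n2M q) / ((hM q)) + (1) * (hM_y q) * (l2M q) / ((hM q)) + (-1/2) * (hM q) ^ 2 + (-1) * (l2M_y q))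
   else if k = 4 \<and> i = 2 \<and> j = 2 then (\<lambda>q. (-1) * (l2M q) * (n2M q) / ((expmA q) * (betaM q) ^ 2) + (-1) * (hM_x q) * (l2M q) / ((hM q)) + (1) * (hM_y q) * (n2M q) / ((hM q)) + (-1) * (n2M_y q))
   else if k = 4 \<and> i = 2 \<and> j = 3 then (\<lambda>q. (-1/2) * (n2M q) * (alphaM q) + (1) * (n2M q) * (dbetaM q) / ((betaM q)))
   else if k = 4 \<and> i = 2 \<and> j = 4 then (\<lambda>q. (1/2) * (l2M q) / ((expmA q) * (betaM q) ^ 2))
   else if k = 4 \<and> i = 3 \<and> j = 1 then (\<lambda>q. (-1/2) * (l2M q) * (alphaM q) + (1) * (l2M q) * (dbetaM q) / ((betaM q)))
   else if k = 4 \<and> i = 3 \<and> j = 2 then (\<lambda>q. (-1/2) * (n2M q) * (alphaM q) + (1) * (n2M q) * (dbetaM q) / ((betaM q)))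
   else if k = 4 \<and> i = 3 \<and> j = 4 then (\<lambda>q. (-1) * (dbetaM q) / ((betaM q)))
   else if k = 4 \<and> i = 4 \<and> j = 1 then (\<lambda>q. (-1/2) * (n2M q) / ((expmA q) * (betaM q) ^ 2))
   else if k = 4 \<and> i = 4 \<and> j = 2 then (\<lambda>q. (1/2) * (l2M q) / ((expmA q) * (betaM q) ^ 2))
   else if k = 4 \<and> i = 4 \<and> j = 3 then (\<lambda>q. (-1) * (dbetaM q) / ((betaM q)))
   else (\<lambda>q. 0))"

lemma Gamma_gM: assumes q: "q \<in> Mspace" shows "Gamma gM q k i j = Christoffel k i j q"
  using exhaust_4[of k] exhaust_4[of i] exhaust_4[of j]
  unfolding Gamma_def pd_eq_dderiv
  by (elim disjE; simp add: sum_4 inv_metric_gM[OF q] ginv_def Let_def gM_eq coframe_simps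
        coefficient_simps q Christoffel_def n2M_x_eq;
      simp add: coefficient_simps q field_simps power2_eq_square power3_eq_cube)

lemma dderiv_Gamma_gM:
  "p \<in> Mspace \<Longrightarrow> dderiv c (\<lambda>q. Gamma gM q k i j) p = dderiv c (Christoffel k i j) p"
  using dderiv_cong_open[OF open_Mspace, of p "\<lambda>q. Gamma gM q k i j" "Christoffel k i j"] Gamma_gM
  by blast

definition "ric_vert p = - alphaM p * dbetaM p / betaM p + (alphaM p)^2 / 2 - 2 * (dbetaM p / betaM p)^2
  + deriv (deriv \<beta>) (p$3) / betaM p"
definition "ric_hor p = ((hM_x p)^2 + (hM_y p)^2) / (hM p)^2
  - (dderiv e1 (dderiv e1 h) (xy p) + dderiv e2 (dderiv e2 h) (xy p)) / hM p
  - (hM p)^2 * alphaM p / (2 * betaM p) - (hM p)^2 * dbetaM p / (betaM p)^2"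
definition "ric_skew p = (dderiv e1 (dderiv e2 h) (xy p) - dderiv e2 (dderiv e1 h) (xy p)) / hM p"
definition "theta3M p i = (dt p i - l2M p * dx p i - n2M p * dy p i) / betaM p"
definition "ric p i j = ric_hor p * (dx p i * dx p j + dy p i * dy p j)
  + ric_skew p * (dx p i * dy p j - dy p i * dx p j)
  + ric_vert p * (dz p i * dz p j + theta3M p i * theta3M p j)"

lemma Ricci_gM:
  assumes p: "p \<in> Mspace"
  shows "Ricci gM p i j = ric p i j"
proof -
  have "\<forall>i j. Ricci gM p i j = ric p i j"
    unfolding forall_4 Ricci_def pd_eq_dderiv
    by (intro conjI; simp add: sum_4 dderiv_Gamma_gM[OF p] Gamma_gM[OF p];
        (simp add: Christoffel_def coefficient_simps p n2M_x_eq ric_def coframe_simps theta3M_def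
           ric_vert_def ric_hor_def ric_skew_def)?;
        (simp add: expmA_eq[OF p] deriv_alpha_eq[OF p] hM_nonzero[OF p] betaM_nonzero[OF p]
           alphaM_nonzero[OF p] field_simps)?;
        (algebra)?)
  then show ?thesis by blast
qed

lemma laplacian2_ln_h:
  assumes u: "u \<in> U"
  shows "laplacian2 (\<lambda>u. ln (h u)) u = (dderiv e1 (dderiv e1 h) u * h u - (dderiv e1 h u)^2) / (h u)^2
     + (dderiv e2 (dderiv e2 h) u * h u - (dderiv e2 h u)^2) / (h u)^2"
proof -
  have diff: "f differentiable (at x)" if "smooth_on U f" "x \<in> U" for f x
    using smooth_on_differentiable[OF that(1) open_U that(2)] .
  have ln: "dderiv c (\<lambda>v. dderiv c (\<lambda>u. ln (h u)) v) u = dderiv c (\<lambda>v. dderiv c h v / h v) u" for c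
  proof (rule dderiv_cong_open[OF open_U u])
    show "dderiv c (\<lambda>u. ln (h u)) x = dderiv c h x / h x" if "x \<in> U" for x
      using dderiv_ln[OF diff[OF smooth_h that]] h_pos that by auto
  qed
  have "h u \<noteq> 0" using h_pos u by force
  then have "dderiv c (\<lambda>v. dderiv c h v / h v) u
      = (dderiv c (dderiv c h) u * h u - dderiv c h u * dderiv c h u) / (h u * h u)"
    if "c \<in> Basis" for c
    using dderiv_divide[OF diff[OF smooth_on_dderiv[OF smooth_h that] u] diff[OF smooth_h u]] by simp
  then show ?thesis
    unfolding laplacian2_def dderiv_def[symmetric] ln by (simp add: power2_eq_square)
qed

lemma scalar_curv_gM:
  assumes p: "p \<in> Mspace"
  shows "scalar_curv gM p =
            2 * (- laplacian2 (\<lambda>u. ln (h u)) (xy p) * exp (A (p$3)) / (h (xy p))\<^sup>2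
                 - 2 * (\<alpha> (p$3))\<^sup>2 + 2 * deriv \<alpha> (p$3)
                 + deriv (deriv \<beta>) (p$3) / \<beta> (p$3)
                 - 2 * (deriv \<beta> (p$3) / \<beta> (p$3))\<^sup>2)"
  unfolding scalar_curv_def inv_metric_gM[OF p] Ricci_gM[OF p] laplacian2_ln_h[OF Mspace_xy[OF p]]
    exp_A_eq[OF p] hM_def[symmetric] hM_x_def[symmetric] hM_y_def[symmetric] alphaM_def[symmetric]
    betaM_def[symmetric] dbetaM_def[symmetric]
  by (simp add: sum_4 ginv_def Let_def ric_def theta3M_def coframe_simps ric_vert_def ric_hor_def ric_skew_def;
      (simp add: expmA_eq[OF p] deriv_alpha_eq[OF p] alphaM_nonzero[OF p] betaM_nonzero[OF p]
         hM_nonzero[OF p] field_simps)?;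
      (algebra)?)

subsection \<open>The complex structures\<close>

text \<open>In the frame X1 = d/dx + l2 d/dt, X2 = d/dy + n2 d/dt, X3 = \<beta> d/dt, X4 = d/dz dual to
  dx, dy, \<theta>3, \<theta>4, the structure Jstr s is given by J X1 = X2, J X3 = s X4.
  Jstr 1 is the Hermitian structure J and Jstr (-1) the Kaehler structure.\<close>

definition "J0 (i::4) (j::4) = (if i = 2 \<and> j = 1 then 1 else if i = 1 \<and> j = 2 then -1 else (0::real))"
definition "JN (i::4) (j::4) = (if i = 4 \<and> j = 1 then 1 else (0::real))"
definition "JL (i::4) (j::4) = (if i = 4 \<and> j = 2 then -1 else (0::real))"
definition "JLb (i::4) (j::4) = (if i = 3 \<and> j = 1 then -1 else (0::real))"
definition "JNb (i::4) (j::4) = (if i = 3 \<and> j = 2 then -1 else (0::real))"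
definition "Jb (i::4) (j::4) = (if i = 4 \<and> j = 3 then -1 else (0::real))"
definition "Jib (i::4) (j::4) = (if i = 3 \<and> j = 4 then 1 else (0::real))"

lemmas Jstr_component_defs = J0_def JN_def JL_def JLb_def JNb_def Jb_def Jib_def

definition "Jstr s q i j = J0 i j + JL i j * l2M q + JN i j * n2M q
   + s * (Jb i j * betaM q + Jib i j * (1 / betaM q) + JLb i j * (l2M q / betaM q) + JNb i j * (n2M q / betaM q))"

definition "Kform s q i j = expmA q * (hM q)^2 * (dx q i * dy q j - dx q j * dy q i)
   + s * ((dt q i - l2M q * dx q i - n2M q * dy q i) / betaM q * dz q j
        - (dt q j - l2M q * dx q j - n2M q * dy q j) / betaM q * dz q i)"

lemma sign_mult_cancel: "s * s = (1::real) \<Longrightarrow> s * (s * x) = x"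
  by (metis mult.assoc mult_1)

lemma Jstr_square:
  assumes p: "p \<in> Mspace" and s: "s * s = 1"
  shows "(\<Sum>k\<in>UNIV. Jstr s p i k * Jstr s p k j) = (if i = j then -1 else 0)"
  using exhaust_4[of i] exhaust_4[of j]
  by (elim disjE; simp add: sum_4 Jstr_def Jstr_component_defs;
      (simp add: betaM_nonzero[OF p] field_simps s sign_mult_cancel[OF s])?)

lemma Jstr_orthogonal:
  assumes p: "p \<in> Mspace" and s: "s * s = 1"
  shows "(\<Sum>k\<in>UNIV. \<Sum>l\<in>UNIV. Jstr s p k i * Jstr s p l j * gM p k l) = gM p i j"
  using exhaust_4[of i] exhaust_4[of j]
  by (elim disjE; simp add: sum_4 Jstr_def Jstr_component_defs gM_eq coframe_simps;
      (simp add: betaM_nonzero[OF p] field_simps s power2_eq_square sign_mult_cancel[OF s])?)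

lemma kahler_form_Jstr:
  assumes p: "p \<in> Mspace" and s: "s * s = 1"
  shows "kahler_form gM (Jstr s) p i j = Kform s p i j"
  unfolding kahler_form_def using exhaust_4[of i] exhaust_4[of j]
  by (elim disjE; simp add: sum_4 Jstr_def Jstr_component_defs gM_eq coframe_simps Kform_def;
      (simp add: betaM_nonzero[OF p] field_simps s power2_eq_square sign_mult_cancel[OF s])?)

lemma nijenhuis_Jstr:
  assumes p: "p \<in> Mspace" and s: "s * s = 1"
  shows "nijenhuis (Jstr s) p i j k = 0"
  unfolding nijenhuis_def pd_eq_dderiv using exhaust_4[of i] exhaust_4[of j] exhaust_4[of k]
  by (elim disjE; simp add: sum_4 Jstr_def Jstr_component_defs coefficient_simps p;
      (simp add: betaM_nonzero[OF p] field_simps s power2_eq_square sign_mult_cancel[OF s])?)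

lemma smooth_Jstr: "smooth_endo_on Mspace (Jstr s)"
proof -
  have lin_z: "linear (\<lambda>q::real^4. q$3)"
    using bounded_linear_vec_nth bounded_linear.linear by blast
  have l2: "Ck_on k Mspace l2M" and n2: "Ck_on k Mspace n2M" for k
    unfolding l2M_def [abs_def] n2M_def [abs_def]
    using Ck_on_compose_linear[OF linear_xy open_Mspace open_U Mspace_xy] smooth_l2 smooth_n2
    by (simp_all add: smooth_on_def)
  have b: "Ck_on k Mspace betaM" and ib: "Ck_on k Mspace (\<lambda>q. 1 / betaM q)" for k
    unfolding betaM_def [abs_def]
    using Ck_on_compose_linear[OF lin_z open_Mspace open_V Mspace_z] Ck_beta Ck_inverse_beta by auto
  show ?thesis
    unfolding smooth_endo_on_def smooth_on_def Jstr_def divide_inverse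
    by (intro allI Ck_on_add[OF open_Mspace] Ck_on_mult[OF open_Mspace] Ck_on_const[OF open_Mspace]
        l2 n2 b ib[unfolded divide_inverse mult_1])
qed

lemma hermitian_Jstr: "s * s = 1 \<Longrightarrow> hermitian_on Mspace gM (Jstr s)"
  unfolding hermitian_on_def almost_complex_on_def orthogonal_on_def J_integrable_on_def
  using smooth_Jstr Jstr_square Jstr_orthogonal nijenhuis_Jstr by blast

lemma dderiv_kahler_form_Jstr:
  assumes p: "p \<in> Mspace" and s: "s * s = 1"
  shows "dderiv c (\<lambda>q. kahler_form gM (Jstr s) q a b) p = dderiv c (\<lambda>q. Kform s q a b) p"
  using dderiv_cong_open[OF open_Mspace p, of "\<lambda>q. kahler_form gM (Jstr s) q a b" "\<lambda>q. Kform s q a b"]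
    kahler_form_Jstr[OF _ s] by blast

lemma kahler_form_Jbar_closed:
  assumes p: "p \<in> Mspace"
  shows "ext_d2 (kahler_form gM (Jstr (-1))) p i j k = 0"
proof -
  have "(-1::real) * -1 = 1" by simp
  note Kform_eq = dderiv_kahler_form_Jstr[OF p this]
  show ?thesis
    unfolding ext_d2_def pd_eq_dderiv Kform_eq
    using exhaust_4[of i] exhaust_4[of j] exhaust_4[of k]
    by (elim disjE; simp add: Kform_def coframe_simps coefficient_simps p;
        (simp add: n2M_x_eq[OF p] expmA_eq[OF p] alphaM_nonzero[OF p] betaM_nonzero[OF p] field_simps)?)
qed

lemma kahler_form_J_lee:
  assumes p: "p \<in> Mspace"
  shows "ext_d2 (kahler_form gM (Jstr 1)) p i j k
    = 2 * wedge12 (\<lambda>p i. - \<alpha> (p$3) * theta4 p i) (kahler_form gM (Jstr 1)) p i j k"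
proof -
  have "(1::real) * 1 = 1" by simp
  note Kform_eq = dderiv_kahler_form_Jstr[OF p this] kahler_form_Jstr[OF p this]
  show ?thesis
    unfolding ext_d2_def wedge12_def pd_eq_dderiv Kform_eq theta4_def alphaM_def[symmetric]
    using exhaust_4[of i] exhaust_4[of j] exhaust_4[of k]
    by (elim disjE; simp add: Kform_def coframe_simps coefficient_simps p;
        (simp add: n2M_x_eq[OF p] expmA_eq[OF p] alphaM_nonzero[OF p] betaM_nonzero[OF p] field_simps)?)
qed

text \<open>Since the Lee form is -\<alpha> dz = -dA, the rescaled form exp (2 A) \<Omega> is closed.\<close>

lemma conformal_kahler_form_closed:
  assumes p: "p \<in> Mspace"
  shows "ext_d2 (\<lambda>r a b. exp (2 * A (r$3)) * kahler_form gM (Jstr 1) r a b) p i j k = 0"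
proof -
  have z: "p$3 \<in> V" using Mspace_z[OF p] .
  have "(\<lambda>q. Kform 1 q a b) differentiable (at p)" for a b
    unfolding Kform_def dx_def dy_def dz_def dt_def using p by (simp add: coefficient_simps)
  then have dw: "(\<lambda>q. kahler_form gM (Jstr 1) q a b) differentiable (at p)" for a b
    using differentiable_cong_open[OF open_Mspace p, of "\<lambda>q. Kform 1 q a b"] kahler_form_Jstr
    by (metis mult_1)
  have pd_exp: "pd i (\<lambda>r. exp (2 * A (r$3))) p
      = (if i = 3 then 2 * \<alpha> (p$3) * exp (2 * A (p$3)) else 0)" for i
    unfolding pd_eq_dderiv using dderiv_axis_vec_nth_compose[OF has_deriv_exp_A[OF z]] by simp
  show ?thesis
    unfolding ext_d2_mult[OF differentiable_vec_nth_compose[OF has_deriv_exp_A[OF z]] dw]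
      kahler_form_J_lee[OF p] wedge12_def pd_exp theta4_def dz_def
    by (simp add: algebra_simps)
qed

lemma Ricci_Jstr_invariant:
  assumes p: "p \<in> Mspace"
  shows "(\<Sum>k\<in>UNIV. \<Sum>l\<in>UNIV. Jstr 1 p k i * Jstr 1 p l j * Ricci gM p k l) = Ricci gM p i j"
  unfolding Ricci_gM[OF p] using exhaust_4[of i] exhaust_4[of j]
  by (elim disjE; simp add: sum_4 Jstr_def Jstr_component_defs ric_def theta3M_def coframe_simps;
      (simp add: betaM_nonzero[OF p] field_simps)?)

lemma smooth_2A: "smooth_on Mspace (\<lambda>r. 2 * A (r$3))"
  unfolding smooth_on_def
proof
  fix k
  have "linear (\<lambda>q::real^4. q$3)"
    using bounded_linear_vec_nth bounded_linear.linear by blast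
  moreover have "Ck_on k V (\<lambda>z. 2 * A z)"
    by (rule Ck_on_mult[OF open_V Ck_on_const[OF open_V] Ck_A])
  ultimately show "Ck_on k Mspace (\<lambda>r. 2 * A (r$3))"
    using Ck_on_compose_linear[OF _ open_Mspace open_V] Mspace_z by blast
qed

lemma kahler_Jbar: "kahler_on Mspace gM (Jstr (-1))"
  unfolding kahler_on_def using hermitian_Jstr[of "-1"] kahler_form_Jbar_closed by simp

lemma kahler_form_Jbar:
  assumes p: "p \<in> Mspace"
  shows "kahler_form gM (Jstr (-1)) p i j = omegaSigmaA h A p i j + wedge11 theta4 (theta3 \<beta> l2 n2) p i j"
  using kahler_form_Jstr[OF p, of "-1"]
  unfolding omegaSigmaA_def wedge11_def theta3_def theta4_def Kform_def
    expmA_def hM_def l2M_def n2M_def betaM_def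
  by (simp add: divide_inverse algebra_simps)

lemma kahler_form_J:
  assumes p: "p \<in> Mspace"
  shows "kahler_form gM (Jstr 1) p i j = omegaSigmaA h A p i j + wedge11 (theta3 \<beta> l2 n2) theta4 p i j"
  using kahler_form_Jstr[OF p, of 1]
  unfolding omegaSigmaA_def wedge11_def theta3_def theta4_def Kform_def
    expmA_def hM_def l2M_def n2M_def betaM_def
  by (simp add: divide_inverse algebra_simps)

lemma lck_J: "lck_on Mspace gM (Jstr 1)"
  unfolding lck_on_def using hermitian_Jstr[of 1] open_Mspace smooth_2A conformal_kahler_form_closed
  by fastforce

end

theorem theorem1:
  fixes U :: "(real^2) set" and V :: "real set"
    and h l2 n2 :: "real^2 \<Rightarrow> real" and \<alpha> A \<beta> :: "real \<Rightarrow> real"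
  assumes "open U" and "smooth_on U h" and "\<forall>u\<in>U. h u > 0"
    and "open V" and "smooth_on V \<alpha>" and "\<forall>z\<in>V. \<alpha> z \<noteq> 0"
    and "\<forall>z\<in>V. (A has_real_derivative \<alpha> z) (at z)"
    and "\<forall>z\<in>V. \<beta> z * \<alpha> z = exp (A z)"
    and "smooth_on U l2" and "smooth_on U n2"
    and "\<forall>u\<in>U. frechet_derivative n2 (at u) (axis 1 1) - frechet_derivative l2 (at u) (axis 2 1)
               = (h u)\<^sup>2"
  defines "M \<equiv> {p :: real^4. xy p \<in> U \<and> p$3 \<in> V}"
    and "g \<equiv> gmet h A \<beta> l2 n2"
  shows "(\<exists>Jb. kahler_on M g Jb \<and>
            (\<forall>p\<in>M. \<forall>i j. kahler_form g Jb p i j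
               = omegaSigmaA h A p i j + wedge11 theta4 (theta3 \<beta> l2 n2) p i j))
       \<and> (\<exists>J. hermitian_on M g J \<and>
            (\<forall>p\<in>M. \<forall>i j. kahler_form g J p i j
               = omegaSigmaA h A p i j + wedge11 (theta3 \<beta> l2 n2) theta4 p i j)
            \<and> ricci_J_invariant_on M g J
            \<and> lck_on M g J
            \<and> is_lee_form_on M g J (\<lambda>p i. - \<alpha> (p$3) * theta4 p i))
       \<and> (\<forall>p\<in>M. scalar_curv g p =
            2 * (- laplacian2 (\<lambda>u. ln (h u)) (xy p) * exp (A (p$3)) / (h (xy p))\<^sup>2
                 - 2 * (\<alpha> (p$3))\<^sup>2 + 2 * deriv \<alpha> (p$3)
                 + deriv (deriv \<beta>) (p$3) / \<beta> (p$3)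
                 - 2 * (deriv \<beta> (p$3) / \<beta> (p$3))\<^sup>2))"
proof -
  interpret kahler_lck_data U V h l2 n2 \<alpha> A \<beta>
    by unfold_locales (use assms in auto)
  have M: "M = Mspace" and g: "g = gM"
    unfolding M_def Mspace_def g_def gM_def by simp_all
  show ?thesis
    unfolding M g
    using kahler_Jbar kahler_form_Jbar hermitian_Jstr[of 1] kahler_form_J lck_J
      Ricci_Jstr_invariant kahler_form_J_lee scalar_curv_gM
    unfolding ricci_J_invariant_on_def is_lee_form_on_def by auto
qed

end
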